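(* There exist clustering instances with $N\subseteq C$ and $k\le n$ and outcomes $W$ in them that satisfy UPRF but do not satisfy rank-JR.
   Context: Let $(\mathcal X,d)$ be a metric space, $N=[n]$ a set of agents and $C$ a set of candidates located in $\mathcal X$, $k\in\mathbb N^+$; an outcome is $W\subseteq C$ with $|W|\le k$; $B(i,r)=\{x\in\mathcal X:d(i,x)\le r\}$. UPRF: $W$ satisfies UPRF if there are no $\ell\in\mathbb N$, no $N'\subseteq N$ with $|N'|\ge \ell n/k$, and no $y\in\mathbb R$ with $\max_{i,i'\in N'}d(i,i')\le y$ and $|\bigcup_{i\in N'}B(i,y)\cap W|<\ell$. Rank-JR: $W$ satisfies rank-JR if for every $y\in\mathbb R$ and every $N'\subseteq N$ with $|N'|\ge n/k$ and $|\bigcap_{i\in N'}B(i,y)\cap C|\ge1$ there is $i\in N'$ with $|B(i,y)\cap W|\ge1$. *)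

theory Defs
  imports Main "HOL.Real"
begin

definition metric_on :: "'a set \<Rightarrow> ('a \<Rightarrow> 'a \<Rightarrow> real) \<Rightarrow> bool" where
  "metric_on X d \<longleftrightarrow>
     (\<forall>x\<in>X. \<forall>y\<in>X. d x y \<ge> 0) \<and>
     (\<forall>x\<in>X. \<forall>y\<in>X. d x y = 0 \<longleftrightarrow> x = y) \<and>
     (\<forall>x\<in>X. \<forall>y\<in>X. d x y = d y x) \<and>
     (\<forall>x\<in>X. \<forall>y\<in>X. \<forall>z\<in>X. d x z \<le> d x y + d y z)"

definition mball :: "'a set \<Rightarrow> ('a \<Rightarrow> 'a \<Rightarrow> real) \<Rightarrow> 'a \<Rightarrow> real \<Rightarrow> 'a set" where
  "mball X d x r = {z \<in> X. d x z \<le> r}"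

text \<open>Agents are indexed by {..<n} (i.e. [n]); agent i is located at p i.\<close>
definition UPRF :: "'a set \<Rightarrow> ('a \<Rightarrow> 'a \<Rightarrow> real) \<Rightarrow> nat \<Rightarrow> (nat \<Rightarrow> 'a) \<Rightarrow> nat \<Rightarrow> 'a set \<Rightarrow> bool" where
  "UPRF X d n p k W \<longleftrightarrow>
     \<not> (\<exists>l::nat. \<exists>N'. N' \<subseteq> {..<n} \<and> (\<exists>y::real.
          real (card N') \<ge> real l * real n / real k \<and>
          (\<forall>i\<in>N'. \<forall>i'\<in>N'. d (p i) (p i') \<le> y) \<and>
          card ((\<Union>i\<in>N'. mball X d (p i) y) \<inter> W) < l))"

definition rank_JR :: "'a set \<Rightarrow> ('a \<Rightarrow> 'a \<Rightarrow> real) \<Rightarrow> nat \<Rightarrow> (nat \<Rightarrow> 'a) \<Rightarrow> 'a set \<Rightarrow> nat \<Rightarrow> 'a set \<Rightarrow> bool" where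
  "rank_JR X d n p C k W \<longleftrightarrow>
     (\<forall>y::real. \<forall>N'. N' \<subseteq> {..<n} \<longrightarrow>
        real (card N') \<ge> real n / real k \<longrightarrow>
        card ((\<Inter>i\<in>N'. mball X d (p i) y) \<inter> C) \<ge> 1 \<longrightarrow>
        (\<exists>i\<in>N'. card (mball X d (p i) y \<inter> W) \<ge> 1))"

end

theory Submission
  imports Defs
begin

text \<open>Two agents sit at 0 and 4 on the line and one seat goes to the candidate at 7.
  With a single seat, UPRF only constrains the whole electorate at radii at least its
  diameter 4, and 7 is within distance 4 of the agent at 4. Rank-JR instead looks at
  radius 2, where both agents share the candidate 2 but neither reaches 7.\<close>

lemma metric_on_abs_diff_inj:
  fixes f :: "'a \<Rightarrow> real"
  assumes "inj_on f X"
  shows "metric_on X (\<lambda>x y. \<bar>f x - f y\<bar>)"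
  using assms unfolding metric_on_def inj_on_def by auto

lemma single_seat_quota_whole_electorate:
  assumes "N' \<subseteq> {..<n}" "n \<ge> 1" "l \<ge> 1" "real l * real n \<le> real (card N')"
  shows "l = 1 \<and> N' = {..<n}"
proof -
  have "card N' \<le> n"
    using assms(1) card_mono[of "{..<n}"] by simp
  with assms(3,4) have "l * n \<le> card N'" "card N' \<le> n"
    by (simp_all add: of_nat_mult[symmetric] del: of_nat_mult)
  moreover have "n \<le> l * n"
    using assms(3) by simp
  ultimately have "card N' = n" "l * n \<le> 1 * n"
    by linarith+
  then have "l = 1"
    using assms(2,3) mult_le_cancel2 by fastforce
  with \<open>card N' = n\<close> show ?thesis
    using assms(1) card_subset_eq[of "{..<n}" N'] by fastforce
qed

lemma UPRF_single_seat_iff: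
  assumes "n \<ge> 1" "finite W"
  shows "UPRF X d n p 1 W \<longleftrightarrow>
    (\<forall>y. (\<forall>i<n. \<forall>i'<n. d (p i) (p i') \<le> y) \<longrightarrow> (\<exists>i<n. mball X d (p i) y \<inter> W \<noteq> {}))"
    (is "_ \<longleftrightarrow> ?covered")
proof
  assume uprf: "UPRF X d n p 1 W"
  show ?covered
  proof (intro allI impI)
    fix y
    assume "\<forall>i<n. \<forall>i'<n. d (p i) (p i') \<le> y"
    moreover have "real (card {..<n}) \<ge> real 1 * real n / real 1"
      by simp
    ultimately have "\<not> card ((\<Union>i\<in>{..<n}. mball X d (p i) y) \<inter> W) < 1"
      using uprf unfolding UPRF_def by blast
    then have "(\<Union>i\<in>{..<n}. mball X d (p i) y) \<inter> W \<noteq> {}"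
      by (metis card.empty less_one)
    then show "\<exists>i<n. mball X d (p i) y \<inter> W \<noteq> {}"
      by blast
  qed
next
  assume covered: ?covered
  show "UPRF X d n p 1 W"
    unfolding UPRF_def
  proof clarify
    fix l N' y
    assume "N' \<subseteq> {..<n}" and quota: "real l * real n / real 1 \<le> real (card N')"
      and diam: "\<forall>i\<in>N'. \<forall>i'\<in>N'. d (p i) (p i') \<le> y"
      and few: "card ((\<Union>i\<in>N'. mball X d (p i) y) \<inter> W) < l"
    then have "l \<ge> 1"
      by simp
    with \<open>N' \<subseteq> {..<n}\<close> quota have "N' = {..<n}" "l = 1"
      using single_seat_quota_whole_electorate assms(1) by auto
    with diam have "\<forall>i<n. \<forall>i'<n. d (p i) (p i') \<le> y"
      by blast
    with covered obtain i where "i < n" "mball X d (p i) y \<inter> W \<noteq> {}"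
      by blast
    then have "(\<Union>i\<in>N'. mball X d (p i) y) \<inter> W \<noteq> {}"
      using \<open>N' = {..<n}\<close> by blast
    with few \<open>l = 1\<close> assms(2) show False
      by simp
  qed
qed

lemma not_rank_JR_if_common_candidate_unreached:
  assumes "finite C" "c \<in> C" "c \<in> X" "k \<ge> 1"
    and near: "\<forall>i<n. d (p i) c \<le> y"
    and unreached: "\<forall>i<n. mball X d (p i) y \<inter> W = {}"
  shows "\<not> rank_JR X d n p C k W"
proof -
  have "c \<in> (\<Inter>i\<in>{..<n}. mball X d (p i) y) \<inter> C"
    using assms(2,3) near by (auto simp: mball_def)
  then have "card ((\<Inter>i\<in>{..<n}. mball X d (p i) y) \<inter> C) \<ge> 1"
    using assms(1) by (metis One_nat_def Suc_leI card_gt_0_iff emptyE finite_Int)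
  moreover have "real n / real k \<le> real (card {..<n})"
    using assms(4) by (simp add: divide_le_eq mult_le_cancel_left1)
  moreover have "\<not> (\<exists>i\<in>{..<n}. card (mball X d (p i) y \<inter> W) \<ge> 1)"
    using unreached by simp
  ultimately show ?thesis
    unfolding rank_JR_def by blast
qed

theorem mainTheorem5:
  shows "\<exists>(X::nat set) d (n::nat) (p::nat \<Rightarrow> nat) (C::nat set) (k::nat) (W::nat set).
           metric_on X d \<and> C \<subseteq> X \<and> finite C \<and> n \<ge> 1 \<and> k \<ge> 1 \<and>
           p ` {..<n} \<subseteq> C \<and> k \<le> n \<and>
           W \<subseteq> C \<and> card W \<le> k \<and>
           UPRF X d n p k W \<and> \<not> rank_JR X d n p C k W"
proof -
  define d :: "nat \<Rightarrow> nat \<Rightarrow> real" where "d x y = \<bar>real x - real y\<bar>" for x y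
  define p :: "nat \<Rightarrow> nat" where "p i = (if i = 0 then 0 else 4)" for i
  have agents: "i < 2 \<longleftrightarrow> i = 0 \<or> i = 1" for i :: nat
    by auto
  have covered: "\<exists>i<2. mball UNIV d (p i) y \<inter> {7} \<noteq> {}"
    if "\<forall>i<2. \<forall>i'<2. d (p i) (p i') \<le> y" for y
  proof -
    from that have "d (p 0) (p 1) \<le> y"
      by simp
    then have "d (p 1) 7 \<le> y"
      by (simp add: d_def p_def)
    then show ?thesis
      by (auto simp: mball_def intro!: exI[of _ 1])
  qed
  have "metric_on UNIV d"
    unfolding d_def by (rule metric_on_abs_diff_inj) (simp add: inj_on_def)
  moreover have "UPRF UNIV d 2 p 1 {7}"
    using covered by (subst UPRF_single_seat_iff) auto
  moreover have "\<not> rank_JR UNIV d 2 p {0, 2, 4, 7} 1 {7}"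
    by (rule not_rank_JR_if_common_candidate_unreached[where c = 2 and y = 2])
      (auto simp: agents d_def p_def mball_def)
  moreover have "p ` {..<2} \<subseteq> {0, 2, 4, 7}"
    by (auto simp: p_def)
  ultimately show ?thesis
    by (intro exI[of _ UNIV] exI[of _ d] exI[of _ 2] exI[of _ p] exI[of _ "{0, 2, 4, 7}"]
        exI[of _ 1] exI[of _ "{7}"]) auto
qed

end
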